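(* Fix finite-dimensional $\mathcal H_2,\mathcal H_1$, an integer $M\ge1$ and an integer $1\le r\le\dim\mathcal H_1$. Then either for every density operator $\rho$ on $\mathcal H_1$ of rank $r$ there exists an extremal quantum $1$-tester with $M$ outcomes and normalization $I_2\otimes\rho$, or for no density operator $\rho$ of rank $r$ does such an extremal tester exist.
   Context: A quantum $1$-tester with $M$ outcomes is a family of positive operators $\{T_i\}_{i=1}^M$ on $\mathcal H_2\otimes\mathcal H_1$ with $\sum_iT_i=I_2\otimes\rho$ for a density operator $\rho$ on $\mathcal H_1$ (its normalization); extremal means an extreme point of the convex set of all such testers with $M$ outcomes. *)

theory Defs
  imports "HOL-Analysis.Analysis"
begin

text \<open>Operators on a finite-dimensional Hilbert space with basis indexed by a finite type 'n
  are complex matrices of type complex^'n^'n.  The tensor product H2 (x) H1 is indexed by 'n2 \<times> 'n1.\<close>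

definition positive_op :: "complex^'n^'n \<Rightarrow> bool" where
  "positive_op A \<longleftrightarrow> (\<forall>v :: complex^'n.
      Im (\<Sum>i\<in>UNIV. \<Sum>j\<in>UNIV. cnj (v$i) * (A$i$j) * v$j) = 0 \<and>
      Re (\<Sum>i\<in>UNIV. \<Sum>j\<in>UNIV. cnj (v$i) * (A$i$j) * v$j) \<ge> 0)"

definition mtrace :: "complex^'n^'n \<Rightarrow> complex" where
  "mtrace A = (\<Sum>i\<in>UNIV. A$i$i)"

definition density_op :: "complex^'n^'n \<Rightarrow> bool" where
  "density_op \<rho> \<longleftrightarrow> positive_op \<rho> \<and> mtrace \<rho> = 1"

definition id_tensor :: "complex^'n1::finite^'n1 \<Rightarrow> complex^('n2::finite \<times> 'n1)^('n2 \<times> 'n1)" where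
  "id_tensor \<rho> = (\<chi> p q. (if fst p = fst q then 1 else 0) * \<rho> $ snd p $ snd q)"

text \<open>Quantum 1-testers with outcomes indexed by the finite type 'm (M = CARD('m)).\<close>
definition testers :: "((complex^('n2::finite \<times> 'n1::finite)^('n2 \<times> 'n1))^'m::finite) set" where
  "testers = {T. (\<forall>i. positive_op (T$i)) \<and>
                 (\<exists>\<rho> :: complex^'n1^'n1. density_op \<rho> \<and> (\<Sum>i\<in>UNIV. T$i) = id_tensor \<rho>)}"

definition extremal_tester :: "((complex^('n2::finite \<times> 'n1::finite)^('n2 \<times> 'n1))^'m::finite) \<Rightarrow> bool" where
  "extremal_tester T \<longleftrightarrow> T extreme_point_of testers"

end

theory Submission
  imports Defs
begin

(* Positive matrices of equal rank are congruent: peeling off pivot columns as in a Cholesky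
   factorisation writes each as a sum of rank-many outer products v v^* of linearly independent
   vectors, and a bijection between two such families extends to an invertible S with
   rho = S sigma S^*.  Conjugating every effect by I (x) S is a linear automorphism of the cone of
   unnormalised testers taking normalisation I (x) sigma to I (x) rho.  Testers are the slice
   tr rho = 1 of this cone, and a cone automorphism maps extreme points of the slice to extreme
   points of the slice (after normalising). *)

definition cinner :: "complex^'n \<Rightarrow> complex^'n \<Rightarrow> complex" where
  "cinner x y = (\<Sum>i\<in>UNIV. cnj (x$i) * y$i)"

definition ctranspose :: "complex^'n^'m \<Rightarrow> complex^'m^'n" where
  "ctranspose A = (\<chi> i j. cnj (A$j$i))"

definition outer :: "complex^'n \<Rightarrow> complex^'n^'n" where
  "outer v = (\<chi> i j. v$i * cnj (v$j))"

lemma positive_op_iff: "positive_op A \<longleftrightarrow> (\<forall>v. 0 \<le> cinner v (A *v v))"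
proof -
  have "(\<Sum>i\<in>UNIV. \<Sum>j\<in>UNIV. cnj (v$i) * (A$i$j) * v$j) = cinner v (A *v v)" for v
    by (simp add: cinner_def matrix_vector_mult_def sum_distrib_left mult.assoc)
  then show ?thesis
    unfolding positive_op_def less_eq_complex_def by auto
qed

lemma cinner_add_left: "cinner (x + y) z = cinner x z + cinner y z"
  by (simp add: cinner_def sum.distrib distrib_right)

lemma cinner_add_right: "cinner z (x + y) = cinner z x + cinner z y"
  by (simp add: cinner_def sum.distrib distrib_left)

lemma cinner_diff_right: "cinner z (x - y) = cinner z x - cinner z y"
  by (simp add: cinner_def sum_subtractf right_diff_distrib)

lemma cinner_scale_right: "cinner z (c *s x) = c * cinner z x"
  by (simp add: cinner_def sum_distrib_left mult.left_commute)

lemma cinner_commute: "cinner y x = cnj (cinner x y)"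
  by (simp add: cinner_def mult.commute)

lemma cinner_axis_left: "cinner (axis i c) y = cnj c * y$i"
  by (simp add: cinner_def axis_def if_distrib if_distribR cong: if_cong)

lemma matrix_vector_mult_axis: "(A *v axis j t)$i = A$i$j * t"
  by (simp add: matrix_vector_mult_def axis_def if_distrib cong: if_cong)

lemma cinner_ctranspose: "cinner x (B *v y) = cinner (ctranspose B *v x) y"
proof -
  have "cinner x (B *v y) = (\<Sum>i\<in>UNIV. \<Sum>j\<in>UNIV. cnj (x$i) * B$i$j * y$j)"
    by (simp add: cinner_def matrix_vector_mult_def sum_distrib_left mult.assoc)
  also have "\<dots> = (\<Sum>j\<in>UNIV. \<Sum>i\<in>UNIV. cnj (x$i) * B$i$j * y$j)"
    by (rule sum.swap)
  also have "\<dots> = cinner (ctranspose B *v x) y"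
    by (simp add: cinner_def ctranspose_def matrix_vector_mult_def sum_distrib_left mult_ac)
  finally show ?thesis .
qed

lemma ctranspose_ctranspose [simp]: "ctranspose (ctranspose A) = A"
  by (simp add: ctranspose_def vec_eq_iff)

lemma ctranspose_mult: "ctranspose (A ** B) = ctranspose B ** ctranspose A"
  by (simp add: ctranspose_def matrix_matrix_mult_def vec_eq_iff mult.commute)

lemma ctranspose_mat_1 [simp]: "ctranspose (mat 1) = mat 1"
  by (simp add: ctranspose_def mat_def vec_eq_iff)

lemma outer_mult_vector: "outer v *v x = cinner v x *s v"
  by (simp add: vec_eq_iff outer_def matrix_vector_mult_def cinner_def sum_distrib_left mult_ac)

lemma congruence_outer: "B ** outer v ** ctranspose B = outer (B *v v)"
proof (rule iffD2[OF matrix_eq], rule allI)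
  fix x
  have "(B ** outer v ** ctranspose B) *v x = B *v (outer v *v (ctranspose B *v x))"
    by (simp add: matrix_vector_mul_assoc matrix_mul_assoc)
  also have "\<dots> = cinner (B *v v) x *s (B *v v)"
    by (simp add: outer_mult_vector cinner_ctranspose[of v "ctranspose B"] vector_scalar_commute)
  finally show "(B ** outer v ** ctranspose B) *v x = outer (B *v v) *v x"
    by (simp add: outer_mult_vector)
qed

lemma matrix_add_rdistrib: "(A + B) ** C = A ** C + B ** C"
  by (simp add: matrix_matrix_mult_def vec_eq_iff sum.distrib distrib_right)

lemma congruence_sum:
  "finite F \<Longrightarrow> B ** sum f F ** C = (\<Sum>x\<in>F. B ** f x ** C)"
  by (induction F rule: finite_induct) (simp_all add: matrix_add_ldistrib matrix_add_rdistrib)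

lemma cinner_quadratic_add:
  "cinner (x + y) (A *v (x + y)) =
     cinner x (A *v x) + cinner y (A *v y) + cinner x (A *v y) + cinner y (A *v x)"
  by (simp add: matrix_vector_right_distrib cinner_add_left cinner_add_right)

lemma positive_op_hermitian:
  assumes "positive_op A"
  shows "A$j$i = cnj (A$i$j)"
proof -
  have real: "Im (cinner v (A *v v)) = 0" for v
    using assms by (simp add: positive_op_iff less_eq_complex_def)
  have "Im (A$i$j * t + cnj t * A$j$i) = 0" for t
    using real[of "axis i 1 + axis j t"] real[of "axis i 1"] real[of "axis j t"]
    by (simp add: cinner_quadratic_add cinner_axis_left matrix_vector_mult_axis)
  from this[of 1] this[of \<i>] show ?thesis
    by (simp add: complex_eq_iff)
qed

lemma ctranspose_positive_op: "positive_op A \<Longrightarrow> ctranspose A = A"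
  by (simp add: ctranspose_def vec_eq_iff) (metis complex_cnj_cnj positive_op_hermitian)

lemma cinner_positive_op_commute:
  assumes "positive_op A"
  shows "cinner y (A *v x) = cnj (cinner x (A *v y))"
  by (metis assms cinner_commute cinner_ctranspose ctranspose_positive_op)

lemma positive_op_diag_nonneg: "positive_op A \<Longrightarrow> 0 \<le> A$i$i"
  using cinner_axis_left[of i 1 "A *v axis i 1"]
  by (simp add: positive_op_iff matrix_vector_mult_axis) metis

lemma positive_op_diag_zero:
  assumes "positive_op A" "A$i$i = 0"
  shows "A$i$j = 0"
proof (rule ccontr)
  assume "A$i$j \<noteq> 0"
  define c where "c = A$i$j"
  define s where "s = (\<bar>Re (A$j$j)\<bar> + 1) / (2 * (cmod c)\<^sup>2)"
  define v where "v = axis i (- (of_real s * c)) + axis j 1"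
  have c: "0 < (cmod c)\<^sup>2"
    using \<open>A$i$j \<noteq> 0\<close> by (simp add: c_def)
  have "cinner v (A *v v) = A$j$j - 2 * of_real (s * (cmod c)\<^sup>2)"
    using assms(2) positive_op_hermitian[OF assms(1), of j i]
    by (simp add: v_def c_def cinner_quadratic_add cinner_axis_left matrix_vector_mult_axis
        complex_norm_square mult_ac del: of_real_power)
  also have "Re \<dots> = Re (A$j$j) - (\<bar>Re (A$j$j)\<bar> + 1)"
    using c by (simp add: s_def field_simps)
  finally have "Re (cinner v (A *v v)) < 0"
    by simp
  then show False
    using assms(1) by (simp add: positive_op_iff less_eq_complex_def not_le[symmetric])
qed

lemma matrix_vector_mult_scaleR_left: "(c *\<^sub>R A) *v x = of_real c *s (A *v x)"
  for A :: "complex^'n^'m"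
  by (simp add: vec_eq_iff matrix_vector_mult_def scaleR_conv_of_real[where 'a=complex]
      sum_distrib_left mult_ac)

lemma positive_op_scaleR: "0 \<le> c \<Longrightarrow> positive_op A \<Longrightarrow> positive_op (c *\<^sub>R A)"
  by (simp add: positive_op_iff matrix_vector_mult_scaleR_left cinner_scale_right less_eq_complex_def)

lemma positive_op_congruence: "positive_op A \<Longrightarrow> positive_op (B ** A ** ctranspose B)"
  by (simp add: positive_op_iff cinner_ctranspose[of _ B] flip: matrix_vector_mul_assoc)

lemma positive_op_outer: "positive_op (outer v)"
  by (simp add: positive_op_iff outer_mult_vector cinner_scale_right cinner_commute[of x v for x]
      complex_norm_square[symmetric] less_eq_complex_def del: of_real_power)

lemma mtrace_add: "mtrace (A + B) = mtrace A + mtrace B"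
  by (simp add: mtrace_def sum.distrib)

lemma mtrace_scaleR: "mtrace (c *\<^sub>R A) = of_real c * mtrace A"
  by (simp add: mtrace_def scaleR_conv_of_real[where 'a=complex] sum_distrib_left)

lemma mtrace_sum: "mtrace (sum f F) = (\<Sum>x\<in>F. mtrace (f x))"
  by (simp add: mtrace_def sum_component sum.swap[of _ F])

lemma positive_op_mtrace_nonneg: "positive_op A \<Longrightarrow> 0 \<le> mtrace A"
  by (simp add: mtrace_def sum_nonneg positive_op_diag_nonneg)

lemma positive_op_mtrace_eq_0:
  assumes "positive_op A" "mtrace A = 0"
  shows "A = 0"
proof -
  have "A$i$i = 0" for i
    using assms by (simp add: mtrace_def sum_nonneg_eq_0_iff positive_op_diag_nonneg)
  then show ?thesis
    using positive_op_diag_zero[OF assms(1)] by (simp add: vec_eq_iff)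
qed

section \<open>Congruence of positive operators of equal rank\<close>

lemma rank_0 [simp]: "rank (0::'a::field^'n^'m) = 0"
proof -
  have "rows (0::'a^'n^'m) = {0}"
    by (auto simp: rows_def row_def vec_eq_iff)
  then show ?thesis
    by (simp add: row_rank_def_gen vec.dim_insert)
qed

lemma span_coordinate_zero:
  "(\<And>x. x \<in> S \<Longrightarrow> x$j = 0) \<Longrightarrow> y \<in> vec.span S \<Longrightarrow> (y::'a::field^'n)$j = 0"
  using vec.span_minimal[of S "{x. x$j = 0}"] by (auto simp: vec.subspace_def)

lemma rank_eq_Suc_rank:
  fixes A B :: "'a::field^'n^'m"
  assumes rows: "\<And>k. row k A = row k B + c k *s row i A"
    and col: "\<And>k. B$k$j = 0" and pivot: "A$i$j \<noteq> 0"
  shows "rank A = Suc (rank B)"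
proof -
  have "vec.span (rows A) = vec.span (insert (row i A) (rows B))"
  proof (rule vec.span_eq[THEN iffD2], intro conjI subsetI)
    fix y assume "y \<in> rows A"
    then obtain k where "y = row k B + c k *s row i A"
      by (auto simp: rows_def) (metis rows)
    then show "y \<in> vec.span (insert (row i A) (rows B))"
      by (simp, intro vec.span_add vec.span_scale vec.span_base) (auto simp: rows_def)
  next
    fix y assume "y \<in> insert (row i A) (rows B)"
    then consider "y = row i A" | k where "y = row k B"
      by (auto simp: rows_def)
    then show "y \<in> vec.span (rows A)"
    proof cases
      case 1
      then show ?thesis by (intro vec.span_base) (auto simp: rows_def)
    next
      case (2 k)
      then have "y = row k A - c k *s row i A"
        by (metis rows add_diff_cancel)
      then show ?thesis
        by (simp, intro vec.span_diff vec.span_scale vec.span_base) (auto simp: rows_def)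
    qed
  qed
  moreover have "row i A \<notin> vec.span (rows B)"
    using span_coordinate_zero[of "rows B" j "row i A"] col pivot by (auto simp: rows_def row_def)
  ultimately show ?thesis
    by (metis row_rank_def_gen vec.dim_span vec.dim_insert Suc_eq_plus1)
qed

(* A - outer (pivot_column A i) is the Schur complement of the pivot A$i$i: its i-th row and
   column vanish and its rank is one less. *)
definition pivot_column :: "complex^'n^'n \<Rightarrow> 'n \<Rightarrow> complex^'n" where
  "pivot_column A i = (\<chi> j. A$j$i / of_real (sqrt (Re (A$i$i))))"

lemma outer_pivot_column:
  assumes "positive_op A"
  shows "outer (pivot_column A i) $ j $ k = A$j$i * A$i$k / A$i$i"
proof -
  have "0 \<le> A$i$i"
    using assms by (rule positive_op_diag_nonneg)
  then have "of_real (sqrt (Re (A$i$i))) * of_real (sqrt (Re (A$i$i))) = A$i$i"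
    by (simp add: less_eq_complex_def complex_eq_iff flip: of_real_mult)
  then show ?thesis
    using positive_op_hermitian[OF assms, of k i] by (simp add: outer_def pivot_column_def)
qed

lemma outer_pivot_column_mult_vector:
  assumes "positive_op A"
  shows "outer (pivot_column A i) *v x = ((A *v x)$i / A$i$i) *s column i A"
  by (simp add: vec_eq_iff matrix_vector_mult_def outer_pivot_column[OF assms] column_def
      sum_divide_distrib sum_distrib_left mult_ac)

lemma positive_op_diff_outer_pivot_column:
  assumes pos: "positive_op A" and pivot: "A$i$i \<noteq> 0"
  shows "positive_op (A - outer (pivot_column A i))"
  unfolding positive_op_iff
proof
  fix x
  define c where "c = (A *v x)$i"
  define t where "t = - c / A$i$i"
  have real: "cnj (A$i$i) = A$i$i"
    using positive_op_hermitian[OF pos, of i i] by simp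
  have "cinner x (column i A) = (\<Sum>j\<in>UNIV. cnj (x$j) * cnj (A$i$j))"
    unfolding cinner_def column_def
    by (intro sum.cong refl) (simp add: positive_op_hermitian[OF pos, of _ i])
  also have "\<dots> = cnj c"
    by (simp add: c_def matrix_vector_mult_def mult.commute)
  finally have "cinner x (column i A) = cnj c" .
  then have "cinner x ((A - outer (pivot_column A i)) *v x) = cinner x (A *v x) - c * cnj c / A$i$i"
    by (simp add: matrix_vector_mult_diff_rdistrib cinner_diff_right cinner_scale_right
        outer_pivot_column_mult_vector[OF pos] c_def)
  also have "\<dots> = cinner (x + axis i t) (A *v (x + axis i t))"
    using cinner_positive_op_commute[OF pos, of x "axis i t"] real pivot
    by (simp add: cinner_quadratic_add cinner_axis_left matrix_vector_mult_axis t_def c_def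
        field_simps)
  finally show "0 \<le> cinner x ((A - outer (pivot_column A i)) *v x)"
    using pos by (simp add: positive_op_iff)
qed

lemma sum_outer_diag_eq_0:
  assumes "finite V" "(\<Sum>w\<in>V. outer w)$i$i = 0" "w \<in> V"
  shows "w$i = 0"
proof -
  have "(\<Sum>w\<in>V. (outer w)$i$i) = 0"
    using assms(2) by (simp add: sum_component)
  then have "\<forall>w\<in>V. (outer w)$i$i = 0"
    by (subst (asm) sum_nonneg_eq_0_iff[OF assms(1)])
      (simp_all add: positive_op_diag_nonneg positive_op_outer)
  then show ?thesis
    using assms(3) by (simp add: outer_def)
qed

lemma positive_op_outer_decomposition:
  fixes A :: "complex^'n^'n"
  assumes "positive_op A"
  shows "\<exists>V. finite V \<and> vec.independent V \<and> card V = rank A \<and> A = (\<Sum>v\<in>V. outer v)"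
  using assms
proof (induction "rank A" arbitrary: A rule: less_induct)
  case less
  show ?case
  proof (cases "A = 0")
    case True
    then show ?thesis
      by (intro exI[of _ "{}"]) (simp add: vec.dependent_def)
  next
    case False
    then obtain i where pivot: "A$i$i \<noteq> 0"
      using positive_op_diag_zero[OF less.prems] by (metis vec_eq_iff zero_index)
    define v where "v = pivot_column A i"
    have entry: "(outer v)$k$l = A$k$i * A$i$l / A$i$i" for k l
      unfolding v_def by (rule outer_pivot_column[OF less.prems])
    have rank: "rank A = Suc (rank (A - outer v))"
      by (rule rank_eq_Suc_rank[of A _ "\<lambda>k. A$k$i / A$i$i" i i])
        (use pivot in \<open>simp_all add: vec_eq_iff row_def entry\<close>)
    obtain V where V: "finite V" "vec.independent V" "card V = rank (A - outer v)"
      "A - outer v = (\<Sum>v\<in>V. outer v)"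
      using less.hyps[of "A - outer v"] rank positive_op_diff_outer_pivot_column[OF less.prems pivot]
      by (auto simp: v_def)
    have "(A - outer v)$i$i = 0"
      using pivot by (simp add: entry)
    then have "w$i = 0" if "w \<in> V" for w
      using sum_outer_diag_eq_0[OF V(1) _ that] V(4) by simp
    moreover have "v$i \<noteq> 0"
      using entry[of i i] pivot by (auto simp: outer_def)
    ultimately have "v \<notin> vec.span V"
      using span_coordinate_zero[of V i v] by blast
    then show ?thesis
      using V rank vec.span_base[of v V]
      by (intro exI[of _ "insert v V"]) (auto simp: vec.independent_insert algebra_simps)
  qed
qed

lemma positive_op_congruent:
  fixes A B :: "complex^'n^'n"
  assumes "positive_op A" "positive_op B" "rank A = rank B"
  obtains S where "invertible S" "A = S ** B ** ctranspose S"
proof -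
  obtain V where V: "finite V" "vec.independent V" "card V = rank A" "A = (\<Sum>v\<in>V. outer v)"
    using positive_op_outer_decomposition[OF assms(1)] by blast
  obtain W where W: "finite W" "vec.independent W" "card W = rank B" "B = (\<Sum>w\<in>W. outer w)"
    using positive_op_outer_decomposition[OF assms(2)] by blast
  obtain h where h: "bij_betw h W V"
    using bij_betw_iff_card[OF W(1) V(1)] V(3) W(3) assms(3) by auto
  obtain g where g: "Vector_Spaces.linear (*s) (*s) g" "inj g" "\<And>w. w \<in> W \<Longrightarrow> g w = h w"
    using vec.linear_independent_extend_inj[OF W(2), of h] h V(2)
    by (metis bij_betw_def bij_betw_imp_surj_on)
  define S where "S = matrix g"
  have S: "S *v x = g x" for x
    using matrix_works[OF g(1)] by (simp add: S_def)
  have "inj ((*v) S)"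
    using g(2) S by (metis ext)
  then obtain S' where "S' ** S = mat 1"
    using matrix_left_invertible_injective by blast
  then have "invertible S"
    using matrix_left_right_inverse invertible_def by blast
  moreover have "S ** B ** ctranspose S = (\<Sum>w\<in>W. outer (h w))"
    by (simp add: W(4) congruence_sum[OF W(1)] congruence_outer S g(3))
  ultimately show ?thesis
    using that sum.reindex_bij_betw[OF h, of outer] V(4) by simp
qed

section \<open>Extreme points of a slice of a cone\<close>

lemma extreme_point_of_combination:
  assumes "x extreme_point_of P" "a \<in> P" "b \<in> P" "0 < t" "t < 1" "x = (1 - t) *\<^sub>R a + t *\<^sub>R b"
  shows "a = x" "b = x"
proof -
  have "a = b"
    using assms unfolding extreme_point_of_def in_segment by blast
  then show "a = x" "b = x"
    using assms(6) by (simp_all flip: scaleR_add_left)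
qed

lemma extreme_point_of_slice_automorphism:
  fixes f :: "'a::real_vector \<Rightarrow> real"
  assumes lin: "linear f" "linear L" "linear L'"
    and inverse: "\<And>y. L' (L y) = y" "\<And>y. L (L' y) = y"
    and invariant: "L ` K \<subseteq> K" "L' ` K \<subseteq> K"
    and cone: "\<And>c y. 0 < c \<Longrightarrow> y \<in> K \<Longrightarrow> c *\<^sub>R y \<in> K"
    and pos: "\<And>y. y \<in> K \<Longrightarrow> y \<noteq> 0 \<Longrightarrow> 0 < f y"
    and ext: "x extreme_point_of (K \<inter> {y. f y = 1})" and normalized: "f (L x) = 1"
  shows "L x extreme_point_of (K \<inter> {y. f y = 1})"
proof -
  have x: "x \<in> K" "f x = 1"
    using ext by (auto simp: extreme_point_of_def)
  have normalize: "f (L' y) > 0 \<and> (1 / f (L' y)) *\<^sub>R L' y \<in> K \<inter> {y. f y = 1}"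
    if "y \<in> K \<inter> {y. f y = 1}" for y
  proof -
    have "L' y \<noteq> 0"
      using that inverse(2)[of y] linear_0[OF lin(2)] linear_0[OF lin(1)] by force
    then have "f (L' y) > 0"
      using that invariant(2) pos by blast
    then show ?thesis
      using that invariant(2) cone linear_scale[OF lin(1)] by auto
  qed
  show ?thesis
    unfolding extreme_point_of_def
  proof (intro conjI ballI)
    show "L x \<in> K \<inter> {y. f y = 1}"
      using x invariant(1) normalized by blast
  next
    fix U V assume U: "U \<in> K \<inter> {y. f y = 1}" and V: "V \<in> K \<inter> {y. f y = 1}"
    show "L x \<notin> open_segment U V"
    proof
      assume "L x \<in> open_segment U V"
      then obtain u where "U \<noteq> V" "0 < u" "u < 1" and Lx: "L x = (1 - u) *\<^sub>R U + u *\<^sub>R V"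
        by (auto simp: in_segment)
      define a where "a = f (L' U)"
      define b where "b = f (L' V)"
      have a: "a > 0" "(1 / a) *\<^sub>R L' U \<in> K \<inter> {y. f y = 1}"
        using normalize[OF U] by (auto simp: a_def)
      have b: "b > 0" "(1 / b) *\<^sub>R L' V \<in> K \<inter> {y. f y = 1}"
        using normalize[OF V] by (auto simp: b_def)
      have x_eq: "x = (1 - u) *\<^sub>R L' U + u *\<^sub>R L' V"
        using arg_cong[OF Lx, of L'] inverse(1) by (simp add: linear_add[OF lin(3)] linear_scale[OF lin(3)])
      then have "(1 - u) * a + u * b = 1"
        using x(2) by (simp add: a_def b_def linear_add[OF lin(1)] linear_scale[OF lin(1)])
      define t where "t = u * b"
      have t: "0 < t" "t < 1"
        using \<open>(1 - u) * a + u * b = 1\<close> \<open>0 < u\<close> \<open>u < 1\<close> a(1) b(1)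
        by (auto simp: t_def) (smt (verit) mult_pos_pos)
      \<comment> \<open>Normalising L' U and L' V writes x as a proper convex combination within the slice.\<close>
      have x_comb: "x = (1 - t) *\<^sub>R ((1 / a) *\<^sub>R L' U) + t *\<^sub>R ((1 / b) *\<^sub>R L' V)"
      proof -
        have "(1 - t) / a = 1 - u"
          using \<open>(1 - u) * a + u * b = 1\<close> a(1) by (simp add: t_def field_simps)
        then show ?thesis
          using b(1) by (simp add: x_eq t_def)
      qed
      have "L' U = a *\<^sub>R x"
        using extreme_point_of_combination(1)[OF ext a(2) b(2) t x_comb] a(1) by auto
      moreover have "L' V = b *\<^sub>R x"
        using extreme_point_of_combination(2)[OF ext a(2) b(2) t x_comb] b(1) by auto
      ultimately have UV: "U = a *\<^sub>R L x" "V = b *\<^sub>R L x"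
        by (metis inverse(2) linear_scale[OF lin(2)])+
      then have "a = 1" "b = 1"
        using U V normalized linear_scale[OF lin(1)] by auto
      then show False
        using UV \<open>U \<noteq> V\<close> by simp
    qed
  qed
qed

section \<open>Testers\<close>

lemma sum_UNIV_prod:
  "(\<Sum>p\<in>(UNIV::('a::finite \<times> 'b::finite) set). f p) = (\<Sum>a\<in>UNIV. \<Sum>b\<in>UNIV. f (a, b))"
  by (simp add: sum.cartesian_product flip: UNIV_Times_UNIV)

lemma id_tensor_mult:
  "(id_tensor A :: complex^('n2::finite \<times> 'n1::finite)^('n2 \<times> 'n1)) ** id_tensor B =
     id_tensor (A ** B)"
proof -
  have "(\<Sum>r\<in>UNIV. (if fst p = fst r then 1 else 0) * A $ snd p $ snd r *
          ((if fst r = fst q then 1 else 0) * B $ snd r $ snd q)) =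
        (\<Sum>a\<in>UNIV. if a = fst p then
           (\<Sum>b\<in>UNIV. (if fst p = fst q then 1 else 0) * (A $ snd p $ b * B $ b $ snd q)) else 0)"
    for p q :: "'n2 \<times> 'n1"
    unfolding sum_UNIV_prod by (intro sum.cong) auto
  then show ?thesis
    by (simp add: vec_eq_iff id_tensor_def matrix_matrix_mult_def sum_distrib_left)
qed

lemma ctranspose_id_tensor:
  "ctranspose (id_tensor A :: complex^('n2::finite \<times> 'n1::finite)^('n2 \<times> 'n1)) =
     id_tensor (ctranspose A)"
  by (simp add: vec_eq_iff id_tensor_def ctranspose_def)

lemma id_tensor_mat_1:
  "(id_tensor (mat 1) :: complex^('n2::finite \<times> 'n1::finite)^('n2 \<times> 'n1)) = mat 1"
  by (auto simp: vec_eq_iff id_tensor_def mat_def prod_eq_iff)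

lemma id_tensor_scaleR:
  "(id_tensor (c *\<^sub>R A) :: complex^('n2::finite \<times> 'n1::finite)^('n2 \<times> 'n1)) =
     c *\<^sub>R id_tensor A"
  by (simp add: vec_eq_iff id_tensor_def scaleR_conv_of_real[where 'a=complex])

lemma mtrace_id_tensor:
  "mtrace (id_tensor A :: complex^('n2::finite \<times> 'n1::finite)^('n2 \<times> 'n1)) =
     of_nat CARD('n2) * mtrace A"
  by (simp add: mtrace_def id_tensor_def sum_UNIV_prod)

definition tester_cone :: "((complex^('n2::finite \<times> 'n1::finite)^('n2 \<times> 'n1))^'m::finite) set" where
  "tester_cone = {T. (\<forall>i. positive_op (T$i)) \<and>
                     (\<exists>\<rho>. positive_op \<rho> \<and> (\<Sum>i\<in>UNIV. T$i) = id_tensor \<rho>)}"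

definition tester_trace :: "(complex^('n2::finite \<times> 'n1::finite)^('n2 \<times> 'n1))^'m::finite \<Rightarrow> real" where
  "tester_trace T = Re (mtrace (\<Sum>i\<in>UNIV. T$i)) / real CARD('n2)"

lemma tester_trace_id_tensor:
  "(\<Sum>i\<in>UNIV. T$i) = id_tensor \<rho> \<Longrightarrow> tester_trace T = Re (mtrace \<rho>)"
  for T :: "(complex^('n2::finite \<times> 'n1::finite)^('n2 \<times> 'n1))^'m::finite"
  by (simp add: tester_trace_def mtrace_id_tensor)

lemma testers_eq_slice: "testers = tester_cone \<inter> {T. tester_trace T = 1}"
proof -
  have "density_op \<rho> \<longleftrightarrow> positive_op \<rho> \<and> Re (mtrace \<rho>) = 1" for \<rho> :: "complex^'n^'n"
    using positive_op_mtrace_nonneg[of \<rho>] by (auto simp: density_op_def less_eq_complex_def complex_eq_iff)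
  then show ?thesis
    unfolding testers_def tester_cone_def by (auto simp: tester_trace_id_tensor)
qed

lemma linear_tester_trace: "linear tester_trace"
  by (rule linearI) (simp_all add: tester_trace_def sum.distrib mtrace_add mtrace_scaleR
      add_divide_distrib flip: scaleR_sum_right)

lemma tester_trace_pos:
  assumes "T \<in> tester_cone" "T \<noteq> 0"
  shows "0 < tester_trace T"
proof -
  obtain k where "T$k \<noteq> 0"
    using assms(2) by (metis vec_eq_iff zero_index)
  have pos: "positive_op (T$i)" for i
    using assms(1) by (simp add: tester_cone_def)
  then have "0 < mtrace (T$k)"
    using positive_op_mtrace_eq_0 \<open>T$k \<noteq> 0\<close> positive_op_mtrace_nonneg by (metis order_le_less)
  also have "\<dots> \<le> mtrace (\<Sum>i\<in>UNIV. T$i)"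
    unfolding mtrace_sum by (rule member_le_sum) (simp_all add: pos positive_op_mtrace_nonneg)
  finally show ?thesis
    by (simp add: tester_trace_def less_complex_def)
qed

lemma tester_cone_scaleR:
  assumes "0 < c" "T \<in> tester_cone"
  shows "c *\<^sub>R T \<in> tester_cone"
proof -
  obtain \<rho> where "\<forall>i. positive_op (T$i)" "positive_op \<rho>" "(\<Sum>i\<in>UNIV. T$i) = id_tensor \<rho>"
    using assms(2) by (auto simp: tester_cone_def)
  then show ?thesis
    using assms(1) unfolding tester_cone_def
    by (intro CollectI conjI allI exI[of _ "c *\<^sub>R \<rho>"])
      (simp_all add: positive_op_scaleR id_tensor_scaleR flip: scaleR_sum_right)
qed

definition tester_congruence ::
    "complex^'n1^'n1 \<Rightarrow> (complex^('n2::finite \<times> 'n1::finite)^('n2 \<times> 'n1))^'m::finite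
       \<Rightarrow> (complex^('n2 \<times> 'n1)^('n2 \<times> 'n1))^'m" where
  "tester_congruence S T = (\<chi> k. id_tensor S ** T$k ** ctranspose (id_tensor S))"

lemma linear_tester_congruence: "linear (tester_congruence S)"
  by (rule linearI) (simp_all add: tester_congruence_def vec_eq_iff matrix_add_ldistrib
      matrix_add_rdistrib scalar_matrix_assoc matrix_scalar_ac)

lemma tester_congruence_inverse:
  "S' ** S = mat 1 \<Longrightarrow> tester_congruence S' (tester_congruence S T) = T"
  for T :: "(complex^('n2::finite \<times> 'n1::finite)^('n2 \<times> 'n1))^'m::finite"
proof -
  assume "S' ** S = mat 1"
  then have "(id_tensor S' :: complex^('n2 \<times> 'n1)^('n2 \<times> 'n1)) ** id_tensor S = mat 1"
    by (simp add: id_tensor_mult id_tensor_mat_1)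
  then have "id_tensor S' ** (id_tensor S ** X ** ctranspose (id_tensor S)) **
      ctranspose (id_tensor S') = X"
    for X :: "complex^('n2 \<times> 'n1)^('n2 \<times> 'n1)"
    by (metis matrix_mul_assoc ctranspose_mult ctranspose_mat_1 matrix_mul_lid matrix_mul_rid)
  then show ?thesis
    by (simp add: tester_congruence_def vec_eq_iff)
qed

lemma sum_tester_congruence:
  "(\<Sum>i\<in>UNIV. T$i) = id_tensor \<rho> \<Longrightarrow>
     (\<Sum>i\<in>UNIV. tester_congruence S T $ i) = id_tensor (S ** \<rho> ** ctranspose S)"
  by (simp add: tester_congruence_def congruence_sum[symmetric] ctranspose_id_tensor id_tensor_mult)

lemma tester_congruence_cone: "tester_congruence S ` tester_cone \<subseteq> tester_cone"
  by (auto simp: tester_cone_def sum_tester_congruence positive_op_congruence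
      intro!: exI[of _ "S ** \<rho> ** ctranspose S" for \<rho>])
    (auto simp: tester_congruence_def positive_op_congruence)

lemma extremal_tester_congruence:
  fixes T :: "(complex^('n2::finite \<times> 'n1::finite)^('n2 \<times> 'n1))^'m::finite"
  assumes "extremal_tester T" "(\<Sum>i\<in>UNIV. T$i) = id_tensor \<sigma>"
    and "invertible S" "density_op (S ** \<sigma> ** ctranspose S)"
  shows "extremal_tester (tester_congruence S T)"
proof -
  obtain S' where S': "S ** S' = mat 1" "S' ** S = mat 1"
    using assms(3) by (auto simp: invertible_def)
  have ext: "T extreme_point_of (tester_cone \<inter> {T. tester_trace T = 1})"
    using assms(1) by (simp add: extremal_tester_def testers_eq_slice)
  have normalized: "tester_trace (tester_congruence S T) = 1"
    using assms(4) sum_tester_congruence[OF assms(2)]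
    by (simp add: tester_trace_id_tensor density_op_def)
  show ?thesis
    unfolding extremal_tester_def testers_eq_slice
    by (rule extreme_point_of_slice_automorphism[where L = "tester_congruence S" and x = T,
          OF linear_tester_trace linear_tester_congruence linear_tester_congruence
          tester_congruence_inverse[OF S'(2)] tester_congruence_inverse[OF S'(1)]
          tester_congruence_cone tester_congruence_cone tester_cone_scaleR tester_trace_pos
          ext normalized])
qed

lemma extremal_tester_transfer:
  fixes T :: "(complex^('n2::finite \<times> 'n1::finite)^('n2 \<times> 'n1))^'m::finite"
  assumes "density_op \<rho>" "density_op \<sigma>" "rank \<rho> = rank \<sigma>"
    and "extremal_tester T" "(\<Sum>i\<in>UNIV. T$i) = id_tensor \<sigma>"
  shows "\<exists>T' :: (complex^('n2 \<times> 'n1)^('n2 \<times> 'n1))^'m.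
           extremal_tester T' \<and> (\<Sum>i\<in>UNIV. T'$i) = id_tensor \<rho>"
proof -
  obtain S where "invertible S" "\<rho> = S ** \<sigma> ** ctranspose S"
    using positive_op_congruent assms(1-3) by (metis density_op_def)
  then show ?thesis
    using extremal_tester_congruence[OF assms(4,5)] sum_tester_congruence[OF assms(5)] assms(1)
    by blast
qed

theorem mainTheorem7:
  fixes r :: nat
  assumes "1 \<le> r" and "r \<le> CARD('n1::finite)"
  shows "(\<forall>\<rho> :: complex^'n1^'n1. density_op \<rho> \<and> rank \<rho> = r \<longrightarrow>
            (\<exists>T :: (complex^('n2::finite \<times> 'n1)^('n2 \<times> 'n1))^('m::finite).
               extremal_tester T \<and> (\<Sum>i\<in>UNIV. T$i) = id_tensor \<rho>))
       \<or> (\<forall>\<rho> :: complex^'n1^'n1. density_op \<rho> \<and> rank \<rho> = r \<longrightarrow>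
            \<not> (\<exists>T :: (complex^('n2 \<times> 'n1)^('n2 \<times> 'n1))^'m.
               extremal_tester T \<and> (\<Sum>i\<in>UNIV. T$i) = id_tensor \<rho>))"
proof (rule disjCI)
  assume "\<not> (\<forall>\<rho> :: complex^'n1^'n1. density_op \<rho> \<and> rank \<rho> = r \<longrightarrow>
            \<not> (\<exists>T :: (complex^('n2 \<times> 'n1)^('n2 \<times> 'n1))^'m.
               extremal_tester T \<and> (\<Sum>i\<in>UNIV. T$i) = id_tensor \<rho>))"
  then obtain \<sigma> :: "complex^'n1^'n1" and T :: "(complex^('n2 \<times> 'n1)^('n2 \<times> 'n1))^'m"
    where "density_op \<sigma>" "rank \<sigma> = r" "extremal_tester T" "(\<Sum>i\<in>UNIV. T$i) = id_tensor \<sigma>"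
    by blast
  then show "\<forall>\<rho> :: complex^'n1^'n1. density_op \<rho> \<and> rank \<rho> = r \<longrightarrow>
      (\<exists>T :: (complex^('n2 \<times> 'n1)^('n2 \<times> 'n1))^'m.
         extremal_tester T \<and> (\<Sum>i\<in>UNIV. T$i) = id_tensor \<rho>)"
    using extremal_tester_transfer by auto
qed

end
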